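(* Let $\beta>0$, $\alpha>2$, $N_o>0$, and $\eta(d)=\frac{1}{(1+d)^\alpha}$. (a) If $C,D>0$ satisfy $\dfrac{1+C}{C(2+D)}<\dfrac{1}{\tau\beta^{1/\alpha}}$, where $\tau=2\Big(\sum_{k=1}^\infty\frac{6}{k^{\alpha-1}}+\sum_{k=1}^\infty\frac{3}{k^\alpha}\Big)^{1/\alpha}$, then $(C,D)$ ensures SINR$_\beta$. (b) For any $C>0$ there exists $D>0$, depending on $\alpha,\beta,C$, such that $(C,D)$ ensures SINR$_\beta$. (c) There exists $D>0$, depending on $\alpha$ and $\beta$, such that $(C,D)$ ensures SINR$_\beta$ for all sufficiently large $C$.
   Context: $\mathrm{SINR}(t,r,T,P,N_o,\eta)=\dfrac{P\eta(\|t-r\|)}{N_o+\sum_{t'\in T}P\eta(\|t'-r\|)}$ for $t,r\in\mathbb{R}^2$, $T$ a finite subset of $\mathbb{R}^2$, $P>0$. $(t,r,T)$ satisfies DC$(C,D)$ if $\|t-r\|\le C$ and $\|t'-t''\|\ge C(2+D)$ for all distinct $t',t''\in T\cup\{t\}$. The pair $(C,D)$ ensures SINR$_\beta$ (given $N_o$ and $\eta$) if there exists $P>0$ such that every triple $(t,r,T)$ satisfying DC$(C,D)$ has $\mathrm{SINR}(t,r,T,P,N_o,\eta)\ge\beta$. *)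

theory Defs
  imports "HOL-Analysis.Analysis"
begin

definition SINR :: "real^2 \<Rightarrow> real^2 \<Rightarrow> (real^2) set \<Rightarrow> real \<Rightarrow> real \<Rightarrow> (real \<Rightarrow> real) \<Rightarrow> real" where
  "SINR t r T P No \<eta> = (P * \<eta> (norm (t - r))) / (No + (\<Sum>t'\<in>T. P * \<eta> (norm (t' - r))))"

definition DC :: "real \<Rightarrow> real \<Rightarrow> real^2 \<Rightarrow> real^2 \<Rightarrow> (real^2) set \<Rightarrow> bool" where
  "DC C D t r T \<longleftrightarrow> norm (t - r) \<le> C \<and>
     (\<forall>t'\<in>T \<union> {t}. \<forall>t''\<in>T \<union> {t}. t' \<noteq> t'' \<longrightarrow> norm (t' - t'') \<ge> C * (2 + D))"

definition ensures_SINR :: "real \<Rightarrow> real \<Rightarrow> (real \<Rightarrow> real) \<Rightarrow> real \<Rightarrow> real \<Rightarrow> bool" where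
  "ensures_SINR \<beta> No \<eta> C D \<longleftrightarrow> (\<exists>P>0. \<forall>t r T. finite T \<and> t \<notin> T \<and> DC C D t r T \<longrightarrow>
     SINR t r T P No \<eta> \<ge> \<beta>)"

end

theory Submission
  imports Defs
begin

text \<open>
  Put s = C(2 + D)/2. Transmitters are 2s-separated and the receiver r is within C \<le> s of t,
  so every interferer lies at distance at least s from r. Comparing areas of disjoint discs of
  radius s, the shell \<open>(n+1)s \<le> |x - r| < (n+2)s\<close> holds at most \<open>(n+3)\<^sup>2 - n\<^sup>2 = 6(n+1) + 3\<close>
  interferers, so the total interference is at most \<open>Z / s\<^sup>\<alpha>\<close> with
  \<open>Z = \<Sum>\<^sub>n (6(n+1)+3)/(n+1)\<^sup>\<alpha>\<close>, while the signal is at least \<open>1/(1+C)\<^sup>\<alpha>\<close>. The hypothesis of (a)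
  says precisely \<open>\<beta> Z / s\<^sup>\<alpha> < 1/(1+C)\<^sup>\<alpha>\<close>, and then a large power P drowns the noise.
  Parts (b) and (c) follow by choosing D large.
\<close>

lemma card_separated_in_annulus:
  fixes S :: "'a::euclidean_space set" and r :: 'a and s R1 R2 :: real
  assumes fin: "finite S" and s: "s > 0" and R1: "R1 \<ge> 0" and R12: "R1 \<le> R2"
    and sep: "\<And>x y. x \<in> S \<Longrightarrow> y \<in> S \<Longrightarrow> x \<noteq> y \<Longrightarrow> 2 * s \<le> dist x y"
    and inner: "\<And>x. x \<in> S \<Longrightarrow> R1 + s \<le> dist x r"
    and outer: "\<And>x. x \<in> S \<Longrightarrow> dist x r + s \<le> R2"
  shows "real (card S) * s ^ DIM('a) \<le> R2 ^ DIM('a) - R1 ^ DIM('a)"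
proof -
  define V where "V = unit_ball_vol (real DIM('a))"
  define U where "U = (\<Union>x\<in>S. ball x s)"
  have ball_fm: "ball x s \<in> fmeasurable lborel" for x :: 'a
    using s by (simp add: fmeasurable_def emeasure_ball)
  have "pairwise (\<lambda>x y. disjnt (ball x s) (ball y s)) S"
    unfolding pairwise_def disjnt_def
  proof (intro ballI impI equalityI subsetI)
    fix x y z assume xy: "x \<in> S" "y \<in> S" "x \<noteq> y" and z: "z \<in> ball x s \<inter> ball y s"
    have "dist x y \<le> dist x z + dist z y" by (rule dist_triangle)
    with z sep[OF xy] show "z \<in> {}" by (auto simp: dist_commute)
  qed auto
  then have "measure lborel U = (\<Sum>x\<in>S. measure lborel (ball x s))"
    unfolding U_def by (intro measure_UNION' fin ball_fm)
  also have "\<dots> = real (card S) * (V * s ^ DIM('a))"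
    using s by (simp add: content_ball V_def)
  finally have measure_U: "measure lborel U = real (card S) * (V * s ^ DIM('a))" .
  have U_fm: "U \<in> fmeasurable lborel"
    unfolding U_def by (intro fmeasurable.finite_UN fin ball_fm)
  have disjoint: "U \<inter> cball r R1 = {}"
  proof (rule ccontr)
    assume "U \<inter> cball r R1 \<noteq> {}"
    then obtain x z where x: "x \<in> S" and z: "dist x z < s" "dist r z \<le> R1"
      unfolding U_def by auto
    have "dist x r \<le> dist x z + dist z r" by (rule dist_triangle)
    with z inner[OF x] show False by (auto simp: dist_commute)
  qed
  have subset: "U \<union> cball r R1 \<subseteq> cball r R2"
  proof -
    have "dist r z \<le> R2" if x: "x \<in> S" and z: "dist x z < s" for x z
      using dist_triangle[of r z x] z outer[OF x] by (auto simp: dist_commute)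
    then show ?thesis using R12 by (auto simp: U_def)
  qed
  have "real (card S) * (V * s ^ DIM('a)) + V * R1 ^ DIM('a) = measure lborel (U \<union> cball r R1)"
    using disjoint U_fm R1 measure_U
    by (subst measure_Union) (auto simp: fmeasurable_def emeasure_cball content_cball V_def)
  also have "\<dots> \<le> measure lborel (cball r R2)"
    using subset U_fm R1 R12 by (intro measure_mono_fmeasurable) (auto simp: fmeasurable_def emeasure_cball)
  also have "\<dots> = V * R2 ^ DIM('a)"
    using R1 R12 by (simp add: content_cball V_def)
  finally have "V * (real (card S) * s ^ DIM('a)) \<le> V * (R2 ^ DIM('a) - R1 ^ DIM('a))"
    by (simp add: algebra_simps)
  moreover have "V > 0" by (simp add: V_def)
  ultimately show ?thesis by simp
qed

lemma card_separated_in_shell: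
  fixes A :: "(real^2) set" and r :: "real^2" and s :: real and n :: nat
  assumes fin: "finite A" and s: "s > 0"
    and sep: "\<And>x y. x \<in> A \<Longrightarrow> y \<in> A \<Longrightarrow> x \<noteq> y \<Longrightarrow> 2 * s \<le> dist x y"
    and shell: "\<And>x. x \<in> A \<Longrightarrow> real (Suc n) * s \<le> dist x r \<and> dist x r < (real n + 2) * s"
  shows "real (card A) \<le> 6 * real (Suc n) + 3"
proof -
  have "real (card A) * s ^ DIM(real^2) \<le> ((real n + 3) * s) ^ DIM(real^2) - (real n * s) ^ DIM(real^2)"
  proof (rule card_separated_in_annulus[OF fin s])
    fix x assume "x \<in> A"
    with shell have "real (Suc n) * s \<le> dist x r" "dist x r < (real n + 2) * s" by auto
    then show "real n * s + s \<le> dist x r" and "dist x r + s \<le> (real n + 3) * s"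
      by (simp_all add: algebra_simps)
  qed (use s sep in auto)
  also have "\<dots> = (6 * real (Suc n) + 3) * s ^ DIM(real^2)"
    by (simp add: power2_eq_square algebra_simps)
  finally show ?thesis using s by simp
qed

lemma summable_const_div_Suc_powr:
  fixes p c :: real
  assumes "p > 1"
  shows "summable (\<lambda>n. c / real (Suc n) powr p)"
proof -
  have "summable (\<lambda>n. real n powr (-p))" using assms by (simp add: summable_real_powr_iff)
  then have "summable (\<lambda>n. c * real (Suc n) powr (-p))" by (subst summable_Suc_iff) (rule summable_mult)
  then show ?thesis by (simp add: powr_minus divide_inverse)
qed

definition packing_sum :: "real \<Rightarrow> real" where
  "packing_sum \<alpha> = (\<Sum>k. 6 / real (Suc k) powr (\<alpha> - 1)) + (\<Sum>k. 3 / real (Suc k) powr \<alpha>)"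

lemma sums_packing_sum:
  assumes "\<alpha> > 2"
  shows "(\<lambda>n. (6 * real (Suc n) + 3) / real (Suc n) powr \<alpha>) sums packing_sum \<alpha>"
proof -
  have "(6 * real (Suc n) + 3) / real (Suc n) powr \<alpha>
      = 6 / real (Suc n) powr (\<alpha> - 1) + 3 / real (Suc n) powr \<alpha>" for n
    by (simp add: add_divide_distrib powr_diff)
  moreover have "(\<lambda>n. 6 / real (Suc n) powr (\<alpha> - 1) + 3 / real (Suc n) powr \<alpha>) sums packing_sum \<alpha>"
    unfolding packing_sum_def using assms
    by (intro sums_add summable_sums summable_const_div_Suc_powr) auto
  ultimately show ?thesis by simp
qed

lemma sum_powr_ratio_le_packing_sum:
  fixes S :: "(real^2) set" and r :: "real^2" and s \<alpha> :: real
  assumes fin: "finite S" and s: "s > 0" and \<alpha>: "\<alpha> > 2"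
    and sep: "\<And>x y. x \<in> S \<Longrightarrow> y \<in> S \<Longrightarrow> x \<noteq> y \<Longrightarrow> 2 * s \<le> dist x y"
    and far: "\<And>x. x \<in> S \<Longrightarrow> s \<le> dist x r"
  shows "(\<Sum>x\<in>S. (s / dist x r) powr \<alpha>) \<le> packing_sum \<alpha>"
proof -
  define g where "g x = nat \<lfloor>dist x r / s\<rfloor> - 1" for x
  define h where "h n = 1 / real (Suc n) powr \<alpha>" for n
  have shell: "real (Suc (g x)) * s \<le> dist x r \<and> dist x r < (real (g x) + 2) * s"
    if "x \<in> S" for x
  proof -
    have "1 \<le> dist x r / s" using far[OF that] s by simp
    then have "real (Suc (g x)) = of_int \<lfloor>dist x r / s\<rfloor>"
      unfolding g_def by (simp add: of_nat_diff)
    moreover have "of_int \<lfloor>dist x r / s\<rfloor> * s \<le> dist x r"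
      using s by (simp add: pos_le_divide_eq[symmetric])
    moreover have "dist x r < (of_int \<lfloor>dist x r / s\<rfloor> + 1) * s"
      using s by (simp add: pos_divide_less_eq[symmetric])
    ultimately have "real (Suc (g x)) * s \<le> dist x r \<and> dist x r < (real (Suc (g x)) + 1) * s"
      by simp
    then show ?thesis by (simp add: add.commute)
  qed
  have term_le: "(s / dist x r) powr \<alpha> \<le> h (g x)" if x: "x \<in> S" for x
  proof -
    have "dist x r > 0" using far[OF x] s by linarith
    then have "s / dist x r \<le> 1 / real (Suc (g x))"
      using shell[OF x] s by (simp add: field_simps)
    then have "(s / dist x r) powr \<alpha> \<le> (1 / real (Suc (g x))) powr \<alpha>"
      using s far[OF x] \<alpha> by (intro powr_mono2) auto
    then show ?thesis by (simp add: h_def powr_divide)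
  qed
  have sums: "(\<lambda>n. (6 * real (Suc n) + 3) * h n) sums packing_sum \<alpha>"
    using sums_packing_sum[OF \<alpha>] by (simp add: h_def)
  have "(\<Sum>x\<in>S. (s / dist x r) powr \<alpha>) \<le> (\<Sum>x\<in>S. h (g x))"
    by (intro sum_mono term_le)
  also have "\<dots> = (\<Sum>n\<in>g ` S. \<Sum>x\<in>{x \<in> S. g x = n}. h (g x))"
    using fin by (intro sum.group[symmetric]) auto
  also have "\<dots> = (\<Sum>n\<in>g ` S. real (card {x \<in> S. g x = n}) * h n)"
    by (intro sum.cong refl) auto
  also have "\<dots> \<le> (\<Sum>n\<in>g ` S. (6 * real (Suc n) + 3) * h n)"
    using fin s sep shell
    by (intro sum_mono mult_right_mono card_separated_in_shell[where r = r]) (auto simp: h_def)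
  also have "\<dots> \<le> (\<Sum>n. (6 * real (Suc n) + 3) * h n)"
    using sums fin by (intro sum_le_suminf) (auto simp: sums_iff h_def)
  also have "\<dots> = packing_sum \<alpha>"
    using sums by (simp add: sums_iff)
  finally show ?thesis .
qed

lemma packing_sum_pos:
  assumes "\<alpha> > 2"
  shows "packing_sum \<alpha> > 0"
proof -
  have "0 < (\<Sum>n. (6 * real (Suc n) + 3) / real (Suc n) powr \<alpha>)"
    using sums_packing_sum[OF assms] by (intro suminf_pos) (auto simp: sums_iff)
  then show ?thesis using sums_packing_sum[OF assms] by (simp add: sums_iff)
qed

lemma sum_powr_pathloss_le:
  fixes T :: "(real^2) set" and r :: "real^2" and s \<alpha> :: real
  assumes fin: "finite T" and s: "s > 0" and \<alpha>: "\<alpha> > 2"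
    and sep: "\<And>x y. x \<in> T \<Longrightarrow> y \<in> T \<Longrightarrow> x \<noteq> y \<Longrightarrow> 2 * s \<le> dist x y"
    and far: "\<And>x. x \<in> T \<Longrightarrow> s \<le> dist x r"
  shows "(\<Sum>x\<in>T. 1 / (1 + norm (x - r)) powr \<alpha>) \<le> packing_sum \<alpha> / s powr \<alpha>"
proof -
  have "1 / (1 + norm (x - r)) powr \<alpha> \<le> (s / dist x r) powr \<alpha> / s powr \<alpha>" if x: "x \<in> T" for x
  proof -
    have d: "dist x r > 0" using far[OF x] s by linarith
    moreover have "1 + norm (x - r) > 0" by (simp add: add_pos_nonneg)
    ultimately have "1 / (1 + norm (x - r)) powr \<alpha> \<le> 1 / dist x r powr \<alpha>"
      using \<alpha> by (intro divide_left_mono powr_mono2) (auto simp: dist_norm)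
    also have "\<dots> = (s / dist x r) powr \<alpha> / s powr \<alpha>"
      using d s by (simp add: powr_divide)
    finally show ?thesis .
  qed
  then have "(\<Sum>x\<in>T. 1 / (1 + norm (x - r)) powr \<alpha>) \<le> (\<Sum>x\<in>T. (s / dist x r) powr \<alpha>) / s powr \<alpha>"
    by (simp add: sum_divide_distrib sum_mono)
  also have "\<dots> \<le> packing_sum \<alpha> / s powr \<alpha>"
    using sum_powr_ratio_le_packing_sum[OF fin s \<alpha> sep far] by (simp add: divide_right_mono)
  finally show ?thesis .
qed

lemma ensures_SINR_of_bounds:
  fixes \<beta> No a b C D :: real and \<eta> :: "real \<Rightarrow> real"
  assumes \<beta>: "\<beta> > 0" and No: "No > 0" and ab: "\<beta> * b < a" and \<eta>: "\<And>d. 0 \<le> \<eta> d"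
    and signal: "\<And>t r T. finite T \<Longrightarrow> t \<notin> T \<Longrightarrow> DC C D t r T \<Longrightarrow> a \<le> \<eta> (norm (t - r))"
    and interference: "\<And>t r T. finite T \<Longrightarrow> t \<notin> T \<Longrightarrow> DC C D t r T \<Longrightarrow>
      (\<Sum>t'\<in>T. \<eta> (norm (t' - r))) \<le> b"
  shows "ensures_SINR \<beta> No \<eta> C D"
  unfolding ensures_SINR_def
proof (intro exI conjI allI impI)
  define P where "P = \<beta> * No / (a - \<beta> * b)"
  show P: "P > 0" using \<beta> No ab by (simp add: P_def)
  fix t r :: "real^2" and T assume H: "finite T \<and> t \<notin> T \<and> DC C D t r T"
  define I where "I = (\<Sum>t'\<in>T. \<eta> (norm (t' - r)))"
  have "\<beta> * (No + P * I) \<le> \<beta> * No + P * (\<beta> * b)"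
    using interference[of T t r] H \<beta> P by (simp add: I_def algebra_simps)
  also have "\<dots> = P * a"
    using ab by (simp add: P_def field_simps)
  also have "\<dots> \<le> P * \<eta> (norm (t - r))"
    using signal[of T t r] H P by simp
  finally have "\<beta> * (No + P * I) \<le> P * \<eta> (norm (t - r))" .
  moreover have "No + P * I > 0"
    using No P \<eta> by (simp add: I_def add_pos_nonneg sum_nonneg)
  ultimately show "\<beta> \<le> SINR t r T P No \<eta>"
    by (simp add: SINR_def I_def sum_distrib_left pos_le_divide_eq)
qed

lemma ensures_SINR_powr_pathloss:
  fixes \<alpha> \<beta> No C D :: real
  assumes \<beta>: "\<beta> > 0" and \<alpha>: "\<alpha> > 2" and No: "No > 0" and C: "C > 0" and D: "D > 0"
    and margin: "(1 + C) * (packing_sum \<alpha> * \<beta>) powr (1 / \<alpha>) < C * (2 + D) / 2"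
  shows "ensures_SINR \<beta> No (\<lambda>d. 1 / (1 + d) powr \<alpha>) C D"
proof -
  define s where "s = C * (2 + D) / 2"
  have s: "s > 0" using C D by (simp add: s_def)
  have Cs: "C \<le> s" using C D by (simp add: s_def field_simps)
  have Z: "packing_sum \<alpha> > 0" using packing_sum_pos[OF \<alpha>] .
  have "((1 + C) * (packing_sum \<alpha> * \<beta>) powr (1 / \<alpha>)) powr \<alpha> < s powr \<alpha>"
    using margin C Z \<beta> \<alpha> by (intro powr_less_mono2) (simp_all add: s_def)
  then have "(1 + C) powr \<alpha> * (packing_sum \<alpha> * \<beta>) < s powr \<alpha>"
    using C Z \<beta> \<alpha> by (simp add: powr_mult powr_powr)
  then have bounds: "\<beta> * (packing_sum \<alpha> / s powr \<alpha>) < 1 / (1 + C) powr \<alpha>"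
    using C s by (simp add: field_simps)
  show ?thesis
  proof (rule ensures_SINR_of_bounds[OF \<beta> No bounds])
    fix t r :: "real^2" and T assume fin: "finite T" and tT: "t \<notin> T" and DC: "DC C D t r T"
    then have tr: "norm (t - r) \<le> C"
      and sep: "\<And>x y. x \<in> T \<union> {t} \<Longrightarrow> y \<in> T \<union> {t} \<Longrightarrow> x \<noteq> y \<Longrightarrow> 2 * s \<le> dist x y"
      by (auto simp: DC_def s_def dist_norm)
    have "1 + norm (t - r) > 0" by (simp add: add_pos_nonneg)
    with tr C \<alpha> show "1 / (1 + C) powr \<alpha> \<le> 1 / (1 + norm (t - r)) powr \<alpha>"
      by (intro divide_left_mono powr_mono2) auto
    have "s \<le> dist x r" if x: "x \<in> T" for x
    proof -
      have "2 * s \<le> dist x t" using sep[of x t] x tT by auto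
      moreover have "dist x t \<le> dist x r + dist t r" by (rule dist_triangle2)
      ultimately show ?thesis using tr Cs by (simp add: dist_norm)
    qed
    with fin s \<alpha> sep show "(\<Sum>x\<in>T. 1 / (1 + norm (x - r)) powr \<alpha>) \<le> packing_sum \<alpha> / s powr \<alpha>"
      by (intro sum_powr_pathloss_le) auto
  qed simp
qed

theorem lemma2:
  fixes \<alpha> \<beta> No :: real
  assumes "\<beta> > 0" "\<alpha> > 2" "No > 0"
  defines "\<eta> \<equiv> (\<lambda>d::real. 1 / (1 + d) powr \<alpha>)"
  defines "\<tau> \<equiv> 2 * ((\<Sum>k. 6 / real (Suc k) powr (\<alpha> - 1)) + (\<Sum>k. 3 / real (Suc k) powr \<alpha>)) powr (1 / \<alpha>)"
  shows "(\<forall>C D. C > 0 \<longrightarrow> D > 0 \<longrightarrow> (1 + C) / (C * (2 + D)) < 1 / (\<tau> * \<beta> powr (1 / \<alpha>))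
            \<longrightarrow> ensures_SINR \<beta> No \<eta> C D)
       \<and> (\<forall>C>0. \<exists>D>0. ensures_SINR \<beta> No \<eta> C D)
       \<and> (\<exists>D>0. \<exists>C0. \<forall>C\<ge>C0. ensures_SINR \<beta> No \<eta> C D)"
proof -
  define K where "K = 2 * (packing_sum \<alpha> * \<beta>) powr (1 / \<alpha>)"
  have K: "K > 0" using packing_sum_pos[OF assms(2)] assms(1) by (simp add: K_def)
  have K_eq: "\<tau> * \<beta> powr (1 / \<alpha>) = K"
    using packing_sum_pos[OF assms(2)] assms(1) by (simp add: \<tau>_def K_def packing_sum_def powr_mult)
  have ensures: "ensures_SINR \<beta> No \<eta> C D" if "C > 0" "D > 0" "(1 + C) * K < C * (2 + D)" for C D
  proof -
    have "(1 + C) * (packing_sum \<alpha> * \<beta>) powr (1 / \<alpha>) < C * (2 + D) / 2"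
      using that(3) unfolding K_def by linarith
    then show ?thesis
      using ensures_SINR_powr_pathloss[of \<beta> \<alpha> No C D] that assms by (simp add: \<eta>_def)
  qed
  have part_a: "ensures_SINR \<beta> No \<eta> C D"
    if "C > 0" "D > 0" "(1 + C) / (C * (2 + D)) < 1 / (\<tau> * \<beta> powr (1 / \<alpha>))" for C D
    using that K mult_pos_pos[of C "2 + D"] by (intro ensures) (simp_all add: K_eq field_simps)
  have part_b: "\<exists>D>0. ensures_SINR \<beta> No \<eta> C D" if "C > 0" for C
  proof (intro exI conjI)
    show "(1 + C) * K / C > 0" using that K by simp
    then show "ensures_SINR \<beta> No \<eta> C ((1 + C) * K / C)"
      using that K by (intro ensures) (simp_all add: field_simps)
  qed
  have part_c: "ensures_SINR \<beta> No \<eta> C (2 * K)" if "C \<ge> 1" for C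
  proof (rule ensures)
    have "(1 + C) * K \<le> 2 * C * K" using that K by (intro mult_right_mono) auto
    also have "\<dots> < C * (2 + 2 * K)" using that by (simp add: algebra_simps)
    finally show "(1 + C) * K < C * (2 + 2 * K)" .
  qed (use that K in auto)
  have "\<exists>D>0. \<exists>C0. \<forall>C\<ge>C0. ensures_SINR \<beta> No \<eta> C D"
    using K part_c by (intro exI[of _ "2 * K"] conjI exI[of _ 1]) auto
  with part_a part_b show ?thesis by simp
qed

end
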